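(* Let $H_1,H_2$ be Hermitian matrices and $f_1,f_2:[0,T]\to\mathbb{R}$ continuously differentiable, and let $U(t,s)$ be the propagator of $H(t)=f_1(t)H_1+f_2(t)H_2$. For $0<h\le T$ let $U_{s,1}(h,0)=\exp(-\mathrm{i} f_2(h)H_2h)\exp(-\mathrm{i} f_1(h)H_1h)$. Then $$U_{s,1}(h,0)-U(h,0)=\int_0^h U(h,s)\exp(-\mathrm{i} s f_2(s)H_2)\,E_{s,1}(s)\,\exp(-\mathrm{i} s f_1(s)H_1)\,ds,$$ where $$E_{s,1}(h)=\int_0^h f_1(h)f_2(s)\Big(\exp\big(\operatorname{ad}_{\mathrm{i} s f_2(s)H_2}\big)([H_1,H_2])\Big)ds-\mathrm{i} h f_1'(h)H_1-\mathrm{i} h f_2'(h)H_2+\int_0^h s f_1(h)f_2'(s)\Big(\exp\big(\operatorname{ad}_{\mathrm{i} s f_2(s)H_2}\big)([H_1,H_2])\Big)ds.$$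
   Context: $U(t,s)$ denotes the exact evolution operator: $\partial_t U(t,s)=-\mathrm{i} H(t)U(t,s)$, $U(s,s)=I$. For matrices $A,B$, $\operatorname{ad}_A(B)=[A,B]=AB-BA$ and $\exp(\operatorname{ad}_A)B=\exp(A)B\exp(-A)$. *)

theory Defs
  imports "HOL-Analysis.Analysis"
begin

text \<open>Note that the library's exp on this type would be componentwise, so the matrix exponential
  is defined explicitly by its power series.\<close>

type_synonym 'n cmat = "complex ^ 'n ^ 'n"

primrec mpow :: "'n::finite cmat \<Rightarrow> nat \<Rightarrow> 'n cmat" where
  "mpow A 0 = mat 1"
| "mpow A (Suc k) = A ** mpow A k"

definition mexp :: "'n::finite cmat \<Rightarrow> 'n cmat" where
  "mexp A = (\<Sum>k. (1 / fact k) *\<^sub>R mpow A k)"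

definition csmult :: "complex \<Rightarrow> 'n::finite cmat \<Rightarrow> 'n cmat" (infixr "*\<^sub>c" 75) where
  "c *\<^sub>c A = (\<chi> i j. c * A $ i $ j)"

definition hermitian :: "'n::finite cmat \<Rightarrow> bool" where
  "hermitian A \<longleftrightarrow> (\<forall>i j. A $ i $ j = cnj (A $ j $ i))"

definition commut :: "'n::finite cmat \<Rightarrow> 'n cmat \<Rightarrow> 'n cmat" where
  "commut A B = A ** B - B ** A"

definition exp_ad :: "'n::finite cmat \<Rightarrow> 'n cmat \<Rightarrow> 'n cmat" where
  "exp_ad A B = mexp A ** B ** mexp (- A)"

end

(* Write N_j = -i H_j, a(s) = s f2(s), b(s) = s f1(s) and V(s) = exp(a(s) N2) exp(b(s) N1), so that the
   splitting error is V(h) - U(h,0). As H(t) is Hermitian, the propagator is unitary and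
   U(h,s) = U(h,0) U(s,0)^*; differentiating U(s,0)^* V(s) gives Duhamel's formula
     V(h) - U(h,0) = integral_0^h U(h,s) (V'(s) - M(s) V(s)) ds,   M = f1 N1 + f2 N2.
   By the product rule, V' - M V = exp(a N2) D exp(b N1) with
     D = f1 (N1 - exp(-a N2) N1 exp(a N2)) + s f1' N1 + s f2' N2,
   the first term being the price of moving N1 past exp(a N2). Since
   d/ds exp(ad_(i a(s) H2)) (i H1) = a'(s) exp(ad_(i a(s) H2)) [H1,H2] and a' = f2 + s f2', integrating
   this derivative over [0,s] turns that term into the two commutator integrals of E_(s,1). *)

theory Submission
  imports Defs
begin

interpretation matrix_mult:
  bounded_bilinear "(**) :: complex ^ 'm ^ 'n \<Rightarrow> complex ^ 'p ^ 'm \<Rightarrow> complex ^ 'p ^ 'n"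
proof -
  have "bilinear ((**) :: complex ^ 'm ^ 'n \<Rightarrow> complex ^ 'p ^ 'm \<Rightarrow> complex ^ 'p ^ 'n)"
    unfolding bilinear_def
    by (auto intro!: linearI simp: matrix_add_ldistrib matrix_scalar_ac scalar_matrix_assoc[symmetric])
      (simp add: vec_eq_iff matrix_matrix_mult_def sum.distrib distrib_right)
  then show "bounded_bilinear ((**) :: complex ^ 'm ^ 'n \<Rightarrow> complex ^ 'p ^ 'm \<Rightarrow> complex ^ 'p ^ 'n)"
    by (rule bilinear_conv_bounded_bilinear[THEN iffD1])
qed

lemma csmult_of_real [simp]: "complex_of_real r *\<^sub>c A = r *\<^sub>R A"
  by (simp add: csmult_def vec_eq_iff scaleR_conv_of_real[where 'a=complex])

lemma csmult_mult_of_real [simp]: "(c * complex_of_real r) *\<^sub>c A = r *\<^sub>R (c *\<^sub>c A)"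
  by (simp add: csmult_def vec_eq_iff scaleR_conv_of_real[where 'a=complex])

lemma csmult_one [simp]: "1 *\<^sub>c A = A"
  by (simp add: csmult_def vec_eq_iff)

lemma csmult_uminus [simp]: "(- c) *\<^sub>c A = - (c *\<^sub>c A)"
  by (simp add: csmult_def vec_eq_iff)

lemma csmult_csmult [simp]: "c *\<^sub>c (d *\<^sub>c A) = (c * d) *\<^sub>c A"
  by (simp add: csmult_def vec_eq_iff)

lemma csmult_add_right: "c *\<^sub>c (A + B) = c *\<^sub>c A + c *\<^sub>c B"
  by (simp add: csmult_def vec_eq_iff algebra_simps)

lemma csmult_diff_right: "c *\<^sub>c (A - B) = c *\<^sub>c A - c *\<^sub>c B"
  by (simp add: csmult_def vec_eq_iff algebra_simps)

lemma csmult_scaleR_right: "c *\<^sub>c (r *\<^sub>R A) = r *\<^sub>R (c *\<^sub>c A)"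
  by (simp add: csmult_def vec_eq_iff scaleR_conv_of_real[where 'a=complex])

lemma csmult_matrix_mult_left: "c *\<^sub>c (A ** B) = (c *\<^sub>c A) ** B"
  by (simp add: csmult_def vec_eq_iff matrix_matrix_mult_def sum_distrib_left mult.assoc)

lemma csmult_matrix_mult_right: "c *\<^sub>c (A ** B) = A ** (c *\<^sub>c B)"
  by (simp add: csmult_def vec_eq_iff matrix_matrix_mult_def sum_distrib_left mult.left_commute)

lemma commut_csmult: "commut (c *\<^sub>c A) (d *\<^sub>c B) = (c * d) *\<^sub>c commut A B"
  by (simp add: commut_def csmult_diff_right csmult_matrix_mult_left csmult_matrix_mult_right[symmetric]
      mult.commute[of d])

lemma commut_i_csmult: "commut (\<i> *\<^sub>c A) (\<i> *\<^sub>c B) = commut B A"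
  by (simp add: commut_csmult) (simp add: commut_def)

definition mat_adjoint :: "complex ^ 'm ^ 'n \<Rightarrow> complex ^ 'n ^ 'm" where
  "mat_adjoint A = (\<chi> i j. cnj (A $ j $ i))"

lemma mat_adjoint_matrix_mult: "mat_adjoint (A ** B) = mat_adjoint B ** mat_adjoint A"
  by (simp add: mat_adjoint_def vec_eq_iff matrix_matrix_mult_def mult.commute)

lemma mat_adjoint_mat_one [simp]: "mat_adjoint (mat 1) = mat 1"
  by (simp add: mat_adjoint_def vec_eq_iff mat_def)

lemma mat_adjoint_add [simp]: "mat_adjoint (A + B) = mat_adjoint A + mat_adjoint B"
  by (simp add: mat_adjoint_def vec_eq_iff)

lemma mat_adjoint_uminus [simp]: "mat_adjoint (- A) = - mat_adjoint A"
  by (simp add: mat_adjoint_def vec_eq_iff)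

lemma mat_adjoint_diff [simp]: "mat_adjoint (A - B) = mat_adjoint A - mat_adjoint B"
  by (simp add: mat_adjoint_def vec_eq_iff)

lemma mat_adjoint_scaleR [simp]: "mat_adjoint (r *\<^sub>R A) = r *\<^sub>R mat_adjoint A"
  by (simp add: mat_adjoint_def vec_eq_iff scaleR_conv_of_real[where 'a=complex])

lemma mat_adjoint_csmult [simp]: "mat_adjoint (c *\<^sub>c A) = cnj c *\<^sub>c mat_adjoint A"
  by (simp add: mat_adjoint_def vec_eq_iff csmult_def)

lemma bounded_linear_mat_adjoint: "bounded_linear mat_adjoint"
  by (rule linear_conv_bounded_linear[THEN iffD1]) (simp add: linear_iff)

lemma hermitian_iff_mat_adjoint: "hermitian H \<longleftrightarrow> mat_adjoint H = H"
  unfolding hermitian_def mat_adjoint_def vec_eq_iff by (auto simp: eq_commute)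

lemma has_vector_derivative_series:
  fixes f f' :: "nat \<Rightarrow> real \<Rightarrow> 'a::banach"
  assumes "convex S" "open S" "x \<in> S"
    and f': "\<And>n y. y \<in> S \<Longrightarrow> (f n has_vector_derivative f' n y) (at y)"
    and unif: "uniform_limit S (\<lambda>n y. \<Sum>i<n. f' i y) g' sequentially"
    and summable: "\<And>y. y \<in> S \<Longrightarrow> summable (\<lambda>n. f n y)"
  shows "((\<lambda>y. \<Sum>n. f n y) has_vector_derivative g' x) (at x)"
proof -
  have "\<exists>g. \<forall>y\<in>S. (\<lambda>n. f n y) sums g y \<and> (g has_derivative (\<lambda>h. h *\<^sub>R g' y)) (at y within S)"
  proof (rule has_derivative_series[OF \<open>convex S\<close> _ _ \<open>x \<in> S\<close>])
    show "(f n has_derivative (\<lambda>h. h *\<^sub>R f' n y)) (at y within S)" if "y \<in> S" for n y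
      using f'[OF that] by (simp add: has_vector_derivative_def has_derivative_at_withinI)
    show "(\<lambda>n. f n x) sums (\<Sum>n. f n x)"
      using summable[OF \<open>x \<in> S\<close>] by (rule summable_sums)
    fix e :: real assume "e > 0"
    with unif have "\<forall>\<^sub>F n in sequentially. \<forall>y\<in>S. norm ((\<Sum>i<n. f' i y) - g' y) < e"
      by (simp add: uniform_limit_iff dist_norm)
    then show "\<forall>\<^sub>F n in sequentially. \<forall>y\<in>S. \<forall>h. norm ((\<Sum>i<n. h *\<^sub>R f' i y) - h *\<^sub>R g' y) \<le> e * norm h"
    proof eventually_elim
      case (elim n)
      have "norm ((\<Sum>i<n. h *\<^sub>R f' i y) - h *\<^sub>R g' y) = \<bar>h\<bar> * norm ((\<Sum>i<n. f' i y) - g' y)"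
        for y h by (simp add: scaleR_sum_right[symmetric] scaleR_diff_right[symmetric])
      with elim show ?case
        by (metis abs_ge_zero less_imp_le mult.commute mult_left_mono real_norm_def)
    qed
  qed
  then obtain g where g: "\<And>y. y \<in> S \<Longrightarrow> (\<lambda>n. f n y) sums g y"
    and g': "(g has_derivative (\<lambda>h. h *\<^sub>R g' x)) (at x)"
    using at_within_open[OF \<open>x \<in> S\<close> \<open>open S\<close>] \<open>x \<in> S\<close> by metis
  show ?thesis
    unfolding has_vector_derivative_def
    by (rule has_derivative_transform_within_open[OF g' \<open>open S\<close> \<open>x \<in> S\<close>])
      (metis g sums_unique)
qed

lemma power_series_has_vector_derivative:
  fixes c :: "nat \<Rightarrow> 'a::banach"
  assumes conv: "\<And>r. summable (\<lambda>k. r ^ k * norm (c k))"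
  shows "((\<lambda>t. \<Sum>k. t ^ k *\<^sub>R c k) has_vector_derivative (\<Sum>k. (real (Suc k) * x ^ k) *\<^sub>R c (Suc k))) (at x)"
proof -
  define S where "S = ball x 1"
  define R where "R = \<bar>x\<bar> + 1"
  define f' where "f' n y = (real n * y ^ (n - 1)) *\<^sub>R c n" for n y
  define M where "M n = real n * R ^ (n - 1) * norm (c n)" for n
  have f'_bound: "norm (f' n y) \<le> M n" if "y \<in> S" for n y
  proof -
    have "\<bar>y\<bar> \<le> R" using that by (auto simp: S_def R_def dist_real_def)
    then show ?thesis
      by (auto simp: f'_def M_def abs_mult power_abs intro!: mult_right_mono mult_left_mono power_mono)
  qed
  have "summable (\<lambda>n. diffs (\<lambda>k. norm (c k)) n * R ^ n)"
    by (rule termdiff_converges_all) (use conv in \<open>simp add: mult.commute\<close>)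
  then have "summable (\<lambda>n. M (Suc n))"
    by (simp add: diffs_def M_def mult_ac)
  then have M: "summable M"
    by (rule summable_Suc_iff[THEN iffD1])
  have "((\<lambda>t. \<Sum>k. t ^ k *\<^sub>R c k) has_vector_derivative (\<Sum>n. f' n x)) (at x)"
  proof (rule has_vector_derivative_series)
    show "((\<lambda>t. t ^ n *\<^sub>R c n) has_vector_derivative f' n y) (at y)" for n y
      unfolding f'_def by (auto intro!: derivative_eq_intros)
    show "uniform_limit S (\<lambda>n y. \<Sum>i<n. f' i y) (\<lambda>y. \<Sum>n. f' n y) sequentially"
      by (rule Weierstrass_m_test[OF f'_bound M])
    show "summable (\<lambda>n. y ^ n *\<^sub>R c n)" for y
      by (rule summable_norm_cancel, rule summable_comparison_test'[OF conv[of "\<bar>y\<bar>"]])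
        (simp add: power_abs)
  qed (auto simp: S_def)
  moreover have "(\<Sum>n. f' n x) = (\<Sum>k. (real (Suc k) * x ^ k) *\<^sub>R c (Suc k))"
  proof -
    have "summable (\<lambda>n. f' n x)"
      by (rule summable_comparison_test'[OF M]) (auto simp: S_def intro: f'_bound)
    from suminf_split_head[OF this] show ?thesis
      by (simp add: f'_def)
  qed
  ultimately show ?thesis by simp
qed

lemma mpow_scaleR: "mpow (t *\<^sub>R A) k = t ^ k *\<^sub>R mpow A k"
  by (induction k) (simp_all add: matrix_scalar_ac scalar_matrix_assoc[symmetric])

lemma mpow_commute: "A ** B = B ** A \<Longrightarrow> A ** mpow B k = mpow B k ** A"
  by (induction k) (simp_all add: matrix_mul_assoc, metis matrix_mul_assoc)

lemma norm_mpow_le: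
  fixes A :: "'n::finite cmat"
  obtains C L where "0 \<le> C" "0 \<le> L" "\<And>k. norm (mpow A k) \<le> C * L ^ k"
proof -
  obtain K where K: "K > 0" "\<And>(X :: 'n cmat) (Y :: 'n cmat). norm (X ** Y) \<le> norm X * norm Y * K"
    using matrix_mult.pos_bounded by blast
  have "norm (mpow A k) \<le> norm (mat 1 :: 'n cmat) * (K * norm A) ^ k" for k
  proof (induction k)
    case (Suc k)
    have "norm (mpow A (Suc k)) \<le> norm A * norm (mpow A k) * K"
      using K(2)[of A "mpow A k"] by simp
    also have "\<dots> \<le> norm A * (norm (mat 1 :: 'n cmat) * (K * norm A) ^ k) * K"
      using Suc K(1) by (intro mult_right_mono mult_left_mono) auto
    finally show ?case by (simp add: algebra_simps)
  qed simp
  with K(1) show ?thesis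
    by (intro that[of "norm (mat 1 :: 'n cmat)" "K * norm A"]) auto
qed

lemma summable_norm_mexp_series: "summable (\<lambda>k. r ^ k * norm ((1 / fact k) *\<^sub>R mpow A k))"
proof -
  obtain C L where CL: "0 \<le> C" "0 \<le> L" "\<And>k. norm (mpow A k) \<le> C * L ^ k"
    using norm_mpow_le by blast
  have "norm (r ^ k * norm ((1 / fact k) *\<^sub>R mpow A k)) \<le> C * (inverse (fact k) * (\<bar>r\<bar> * L) ^ k)" for k
  proof -
    have "norm (r ^ k * norm ((1 / fact k) *\<^sub>R mpow A k)) = \<bar>r\<bar> ^ k / fact k * norm (mpow A k)"
      by (simp add: abs_mult power_abs)
    also have "\<dots> \<le> \<bar>r\<bar> ^ k / fact k * (C * L ^ k)"
      by (intro mult_left_mono CL) auto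
    finally show ?thesis
      by (simp add: field_simps power_mult_distrib)
  qed
  then show ?thesis
    by (rule summable_comparison_test'[OF summable_mult[OF summable_exp]])
qed

lemma summable_mexp_series: "summable (\<lambda>k. (1 / fact k) *\<^sub>R mpow A k)"
  by (rule summable_norm_cancel) (use summable_norm_mexp_series[of 1 A] in simp)

lemma mexp_scaleR_eq_power_series: "mexp (t *\<^sub>R A) = (\<Sum>k. t ^ k *\<^sub>R ((1 / fact k) *\<^sub>R mpow A k))"
  by (simp add: mexp_def mpow_scaleR)

lemma mexp_scaleR_has_vector_derivative:
  "((\<lambda>t. mexp (t *\<^sub>R A)) has_vector_derivative A ** mexp (x *\<^sub>R A)) (at x within S)"
proof -
  have "((\<lambda>t. mexp (t *\<^sub>R A)) has_vector_derivative
      (\<Sum>k. (real (Suc k) * x ^ k) *\<^sub>R ((1 / fact (Suc k)) *\<^sub>R mpow A (Suc k)))) (at x)"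
    unfolding mexp_scaleR_eq_power_series
    by (rule power_series_has_vector_derivative) (rule summable_norm_mexp_series)
  moreover have "(real (Suc k) * x ^ k) *\<^sub>R ((1 / fact (Suc k)) *\<^sub>R mpow A (Suc k))
      = A ** (x ^ k *\<^sub>R ((1 / fact k) *\<^sub>R mpow A k))" for k
    by (simp add: matrix_mult.scaleR_right field_simps del: of_nat_Suc)
  moreover have "(\<Sum>k. A ** (x ^ k *\<^sub>R ((1 / fact k) *\<^sub>R mpow A k))) = A ** mexp (x *\<^sub>R A)"
    unfolding mexp_scaleR_eq_power_series
    by (rule bounded_linear.suminf[OF matrix_mult.bounded_linear_right, symmetric])
      (use summable_mexp_series[of "x *\<^sub>R A"] in \<open>simp add: mpow_scaleR\<close>)
  ultimately show ?thesis
    by (simp add: has_vector_derivative_at_within)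
qed

lemma mexp_zero [simp]: "mexp (0 :: 'n::finite cmat) = mat 1"
proof -
  have "(\<lambda>k. (1 / fact k) *\<^sub>R mpow (0 :: 'n cmat) k) = (\<lambda>k. if k = 0 then mat 1 else 0)"
  proof
    show "(1 / fact k) *\<^sub>R mpow (0 :: 'n cmat) k = (if k = 0 then mat 1 else 0)" for k
      by (cases k) simp_all
  qed
  then show ?thesis
    using sums_single[of 0 "\<lambda>_. mat 1 :: 'n cmat"] by (simp add: mexp_def sums_iff)
qed

lemma mexp_commute:
  assumes "A ** B = B ** A"
  shows "A ** mexp B = mexp B ** A"
proof -
  have "A ** mexp B = (\<Sum>k. A ** ((1 / fact k) *\<^sub>R mpow B k))"
    unfolding mexp_def
    by (rule bounded_linear.suminf[OF matrix_mult.bounded_linear_right summable_mexp_series])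
  also have "\<dots> = (\<Sum>k. ((1 / fact k) *\<^sub>R mpow B k) ** A)"
    by (simp add: matrix_mult.scaleR_left matrix_mult.scaleR_right mpow_commute[OF assms])
  also have "\<dots> = mexp B ** A"
    unfolding mexp_def
    by (rule bounded_linear.suminf[OF matrix_mult.bounded_linear_left summable_mexp_series, symmetric])
  finally show ?thesis .
qed

lemma mexp_scaleR_commute: "A ** mexp (t *\<^sub>R A) = mexp (t *\<^sub>R A) ** A"
  by (rule mexp_commute) (simp add: matrix_mult.scaleR_left matrix_mult.scaleR_right)

lemma mexp_minus_inverse: "mexp A ** mexp (- A) = mat 1"
proof -
  define F where "F t = mexp (t *\<^sub>R A) ** mexp (t *\<^sub>R - A)" for t
  have "(F has_vector_derivative 0) (at t within UNIV)" for t
  proof -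
    have "(F has_vector_derivative
        mexp (t *\<^sub>R A) ** (- A ** mexp (t *\<^sub>R - A)) + A ** mexp (t *\<^sub>R A) ** mexp (t *\<^sub>R - A)) (at t)"
      unfolding F_def by (intro matrix_mult.has_vector_derivative mexp_scaleR_has_vector_derivative)
    moreover have "mexp (t *\<^sub>R A) ** (- A ** mexp (t *\<^sub>R - A)) + A ** mexp (t *\<^sub>R A) ** mexp (t *\<^sub>R - A) = 0"
      using mexp_scaleR_commute[of A t]
      by (simp add: matrix_mul_assoc matrix_mult.minus_left matrix_mult.minus_right)
    ultimately show ?thesis
      by simp
  qed
  then have "F 1 = F 0"
    by (rule has_vector_derivative_zero_constant[OF convex_UNIV]) auto
  then show ?thesis by (simp add: F_def)
qed

lemma has_vector_derivative_mexp_scaleR: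
  assumes "(f has_real_derivative f') (at x within S)"
  shows "((\<lambda>t. mexp (f t *\<^sub>R A)) has_vector_derivative f' *\<^sub>R (A ** mexp (f x *\<^sub>R A))) (at x within S)"
  using vector_diff_chain_within[OF assms[unfolded has_real_derivative_iff_has_vector_derivative]
      mexp_scaleR_has_vector_derivative]
  by (simp add: o_def)

lemma exp_ad_zero [simp]: "exp_ad 0 B = B"
  by (simp add: exp_ad_def)

lemma exp_ad_minus_right [simp]: "exp_ad A (- B) = - exp_ad A B"
  by (simp add: exp_ad_def matrix_mult.minus_left matrix_mult.minus_right)

lemma exp_ad_has_vector_derivative:
  assumes "(a has_real_derivative a') (at t within S)"
  shows "((\<lambda>s. exp_ad (a s *\<^sub>R A) B) has_vector_derivative a' *\<^sub>R exp_ad (a t *\<^sub>R A) (commut A B))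
    (at t within S)"
proof -
  define E E' where "E = mexp (a t *\<^sub>R A)" and "E' = mexp (a t *\<^sub>R - A)"
  have "((\<lambda>s. mexp (a s *\<^sub>R A) ** B ** mexp (a s *\<^sub>R - A)) has_vector_derivative
      (E ** B) ** (a' *\<^sub>R (- A ** E')) + (E ** 0 + (a' *\<^sub>R (A ** E)) ** B) ** E') (at t within S)"
    unfolding E_def E'_def
    by (intro matrix_mult.has_vector_derivative has_vector_derivative_const
        has_vector_derivative_mexp_scaleR assms)
  also have "(E ** B) ** (a' *\<^sub>R (- A ** E')) + (E ** 0 + (a' *\<^sub>R (A ** E)) ** B) ** E'
      = a' *\<^sub>R (E ** A ** B ** E') - a' *\<^sub>R (E ** B ** A ** E')"
    using mexp_scaleR_commute[of A "a t", folded E_def]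
    by (simp add: matrix_mul_assoc matrix_mult.scaleR_left matrix_mult.scaleR_right
        matrix_mult.minus_left matrix_mult.minus_right)
  also have "\<dots> = a' *\<^sub>R exp_ad (a t *\<^sub>R A) (commut A B)"
    by (simp add: E_def E'_def exp_ad_def commut_def matrix_mul_assoc scaleR_diff_right
        matrix_mult.diff_left matrix_mult.diff_right)
  finally show ?thesis
    by (simp add: exp_ad_def)
qed

lemma mexp_mult_exp_ad_minus: "mexp A ** exp_ad (- A) B = B ** mexp A"
  by (simp add: exp_ad_def matrix_mul_assoc mexp_minus_inverse)

locale skew_hermitian_evolution =
  fixes S :: "real set" and M :: "real \<Rightarrow> 'n::finite cmat" and U :: "real \<Rightarrow> real \<Rightarrow> 'n cmat"
  assumes convex: "convex S"
    and skew_hermitian: "\<And>t. t \<in> S \<Longrightarrow> mat_adjoint (M t) = - M t"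
    and evolution_diag: "\<And>s. s \<in> S \<Longrightarrow> U s s = mat 1"
    and evolution_deriv: "\<And>t s. t \<in> S \<Longrightarrow> s \<in> S \<Longrightarrow>
      ((\<lambda>\<tau>. U \<tau> s) has_vector_derivative M t ** U t s) (at t within S)"
begin

lemma adjoint_mult_evolution_const:
  assumes "r \<in> S" "s \<in> S" "t \<in> S" "t' \<in> S"
  shows "mat_adjoint (U t r) ** U t s = mat_adjoint (U t' r) ** U t' s"
proof -
  have "((\<lambda>\<tau>. mat_adjoint (U \<tau> r) ** U \<tau> s) has_vector_derivative 0) (at \<tau> within S)"
    if "\<tau> \<in> S" for \<tau>
  proof -
    have "((\<lambda>\<tau>. mat_adjoint (U \<tau> r) ** U \<tau> s) has_vector_derivative
        mat_adjoint (U \<tau> r) ** (M \<tau> ** U \<tau> s) + mat_adjoint (M \<tau> ** U \<tau> r) ** U \<tau> s) (at \<tau> within S)"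
      by (intro matrix_mult.has_vector_derivative evolution_deriv that assms
          bounded_linear.has_vector_derivative[OF bounded_linear_mat_adjoint])
    moreover have "mat_adjoint (U \<tau> r) ** (M \<tau> ** U \<tau> s) + mat_adjoint (M \<tau> ** U \<tau> r) ** U \<tau> s = 0"
      by (simp add: mat_adjoint_matrix_mult skew_hermitian[OF that] matrix_mul_assoc
          matrix_mult.minus_left matrix_mult.minus_right)
    ultimately show ?thesis
      by simp
  qed
  then have "\<exists>c. \<forall>\<tau>\<in>S. mat_adjoint (U \<tau> r) ** U \<tau> s = c"
    by (intro has_derivative_zero_constant[OF convex]) (simp add: has_vector_derivative_def)
  with assms show ?thesis
    by auto
qed

lemma evolution_unitary:
  assumes "t \<in> S" "s \<in> S"
  shows "mat_adjoint (U t s) ** U t s = mat 1" and "U t s ** mat_adjoint (U t s) = mat 1"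
proof -
  show "mat_adjoint (U t s) ** U t s = mat 1"
    using adjoint_mult_evolution_const[OF assms(2,2,1,2)] by (simp add: evolution_diag assms)
  then show "U t s ** mat_adjoint (U t s) = mat 1"
    by (rule matrix_left_right_inverse[THEN iffD1])
qed

lemma evolution_factor:
  assumes "r \<in> S" "s \<in> S" "t \<in> S"
  shows "U t s = U t r ** mat_adjoint (U s r)"
proof -
  have "mat_adjoint (U t r) ** U t s = mat_adjoint (U s r)"
    using adjoint_mult_evolution_const[OF assms(1,2,3,2)] by (simp add: evolution_diag assms)
  then have "U t r ** (mat_adjoint (U t r) ** U t s) = U t r ** mat_adjoint (U s r)"
    by simp
  then show ?thesis
    by (simp add: matrix_mul_assoc evolution_unitary assms)
qed

lemma variation_of_constants:
  assumes "r \<in> S" "t \<in> S" "r \<le> t"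
    and V: "\<And>s. s \<in> S \<Longrightarrow> (V has_vector_derivative M s ** V s + R s) (at s within S)"
  shows "((\<lambda>s. U t s ** R s) has_integral V t - U t r ** V r) {r..t}"
proof -
  have sub: "{r..t} \<subseteq> S"
    using convex[unfolded convex_contains_segment] assms(1-3) by (metis closed_segment_eq_real_ivl1)
  have deriv: "((\<lambda>s. mat_adjoint (U s r) ** V s) has_vector_derivative mat_adjoint (U s r) ** R s)
      (at s within S)" if "s \<in> S" for s
  proof -
    have "((\<lambda>s. mat_adjoint (U s r) ** V s) has_vector_derivative
        mat_adjoint (U s r) ** (M s ** V s + R s) + mat_adjoint (M s ** U s r) ** V s) (at s within S)"
      by (intro matrix_mult.has_vector_derivative evolution_deriv V that assms
          bounded_linear.has_vector_derivative[OF bounded_linear_mat_adjoint])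
    moreover have "mat_adjoint (U s r) ** (M s ** V s + R s) + mat_adjoint (M s ** U s r) ** V s
        = mat_adjoint (U s r) ** R s"
      by (simp add: mat_adjoint_matrix_mult skew_hermitian[OF that] matrix_mul_assoc matrix_add_ldistrib
          matrix_mult.minus_left matrix_mult.minus_right)
    ultimately show ?thesis
      by simp
  qed
  have "((\<lambda>s. mat_adjoint (U s r) ** R s) has_integral
      mat_adjoint (U t r) ** V t - mat_adjoint (U r r) ** V r) {r..t}"
    by (intro fundamental_theorem_of_calculus \<open>r \<le> t\<close> has_vector_derivative_within_subset[OF deriv sub])
      (use sub in auto)
  from has_integral_linear[OF this matrix_mult.bounded_linear_right[of "U t r"]]
  have "((\<lambda>s. U t r ** (mat_adjoint (U s r) ** R s)) has_integral V t - U t r ** V r) {r..t}"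
    by (simp add: o_def matrix_mul_assoc matrix_mult.diff_right evolution_unitary evolution_diag assms)
  moreover have "U t r ** (mat_adjoint (U s r) ** R s) = U t s ** R s" if "s \<in> {r..t}" for s
  proof -
    have "U t s = U t r ** mat_adjoint (U s r)"
      using sub that assms by (intro evolution_factor) auto
    then show ?thesis
      by (simp add: matrix_mul_assoc)
  qed
  ultimately show ?thesis
    by (rule has_integral_eq[rotated])
qed

end

lemma schroedinger_evolution:
  fixes H1 H2 :: "'n::finite cmat"
  assumes "convex S" and herm: "hermitian H1" "hermitian H2"
    and "\<And>s. s \<in> S \<Longrightarrow> U s s = mat 1"
    and U_deriv: "\<And>t s. t \<in> S \<Longrightarrow> s \<in> S \<Longrightarrow>
      ((\<lambda>\<tau>. U \<tau> s) has_vector_derivative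
        (- \<i>) *\<^sub>c ((complex_of_real (f1 t) *\<^sub>c H1 + complex_of_real (f2 t) *\<^sub>c H2) ** U t s))
      (at t within S)"
  shows "skew_hermitian_evolution S (\<lambda>t. f1 t *\<^sub>R - (\<i> *\<^sub>c H1) + f2 t *\<^sub>R - (\<i> *\<^sub>c H2)) U"
proof
  show "mat_adjoint (f1 t *\<^sub>R - (\<i> *\<^sub>c H1) + f2 t *\<^sub>R - (\<i> *\<^sub>c H2))
      = - (f1 t *\<^sub>R - (\<i> *\<^sub>c H1) + f2 t *\<^sub>R - (\<i> *\<^sub>c H2))" for t
    using herm by (simp add: hermitian_iff_mat_adjoint)
  show "((\<lambda>\<tau>. U \<tau> s) has_vector_derivative (f1 t *\<^sub>R - (\<i> *\<^sub>c H1) + f2 t *\<^sub>R - (\<i> *\<^sub>c H2)) ** U t s)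
      (at t within S)" if "t \<in> S" "s \<in> S" for t s
    using U_deriv[OF that]
    by (simp add: csmult_matrix_mult_left csmult_add_right csmult_scaleR_right
        matrix_mult.minus_left matrix_mult.diff_left)
qed (use assms in auto)

lemma splitting_has_vector_derivative:
  fixes N1 N2 :: "'n::finite cmat"
  assumes f1: "(f1 has_real_derivative f1') (at s within S)"
    and f2: "(f2 has_real_derivative f2') (at s within S)"
  shows "((\<lambda>s. mexp ((s * f2 s) *\<^sub>R N2) ** mexp ((s * f1 s) *\<^sub>R N1)) has_vector_derivative
      (f1 s *\<^sub>R N1 + f2 s *\<^sub>R N2) ** (mexp ((s * f2 s) *\<^sub>R N2) ** mexp ((s * f1 s) *\<^sub>R N1))
      + mexp ((s * f2 s) *\<^sub>R N2) ** (f1 s *\<^sub>R (N1 - exp_ad ((s * f2 s) *\<^sub>R - N2) N1)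
          + (s * f1') *\<^sub>R N1 + (s * f2') *\<^sub>R N2) ** mexp ((s * f1 s) *\<^sub>R N1)) (at s within S)"
proof -
  define E1 E2 Q where "E1 = mexp ((s * f1 s) *\<^sub>R N1)" and "E2 = mexp ((s * f2 s) *\<^sub>R N2)"
    and "Q = exp_ad ((s * f2 s) *\<^sub>R - N2) N1"
  have "((\<lambda>s. s * f1 s) has_real_derivative f1 s + s * f1') (at s within S)"
    and "((\<lambda>s. s * f2 s) has_real_derivative f2 s + s * f2') (at s within S)"
    using f1 f2 by (auto intro!: derivative_eq_intros)
  then have "((\<lambda>s. mexp ((s * f2 s) *\<^sub>R N2) ** mexp ((s * f1 s) *\<^sub>R N1)) has_vector_derivative
      E2 ** ((f1 s + s * f1') *\<^sub>R (N1 ** E1)) + ((f2 s + s * f2') *\<^sub>R (N2 ** E2)) ** E1) (at s within S)"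
    unfolding E1_def E2_def by (intro matrix_mult.has_vector_derivative has_vector_derivative_mexp_scaleR)
  also have "E2 ** ((f1 s + s * f1') *\<^sub>R (N1 ** E1)) + ((f2 s + s * f2') *\<^sub>R (N2 ** E2)) ** E1
      = (f1 s *\<^sub>R N1 + f2 s *\<^sub>R N2) ** (E2 ** E1)
        + E2 ** (f1 s *\<^sub>R (N1 - Q) + (s * f1') *\<^sub>R N1 + (s * f2') *\<^sub>R N2) ** E1"
  proof -
    have "E2 ** Q = N1 ** E2"
      using mexp_mult_exp_ad_minus[of "(s * f2 s) *\<^sub>R N2" N1] by (simp add: E2_def Q_def)
    moreover have "N2 ** E2 = E2 ** N2"
      unfolding E2_def by (rule mexp_commute) (simp add: matrix_mult.scaleR_left matrix_mult.scaleR_right)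
    ultimately show ?thesis
      by (simp add: matrix_mul_assoc matrix_add_ldistrib matrix_mult.add_left matrix_mult.diff_left
          matrix_mult.diff_right matrix_mult.scaleR_left matrix_mult.scaleR_right algebra_simps)
  qed
  finally show ?thesis
    unfolding E1_def E2_def Q_def .
qed

lemma integral_exp_ad_commut:
  fixes A B :: "'n::finite cmat"
  assumes "0 \<le> r"
    and f: "\<And>s. s \<in> {0..r} \<Longrightarrow> (f has_real_derivative f' s) (at s within {0..r})"
    and f'_cont: "continuous_on {0..r} f'"
  shows "integral {0..r} (\<lambda>s. (c * f s) *\<^sub>R exp_ad ((s * f s) *\<^sub>R A) (commut A B))
       + integral {0..r} (\<lambda>s. (s * c * f' s) *\<^sub>R exp_ad ((s * f s) *\<^sub>R A) (commut A B))
     = c *\<^sub>R (exp_ad ((r * f r) *\<^sub>R A) B - B)"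
proof -
  define X where "X s = exp_ad ((s * f s) *\<^sub>R A) (commut A B)" for s
  have a: "((\<lambda>s. s * f s) has_real_derivative f s + s * f' s) (at s within {0..r})"
    if "s \<in> {0..r}" for s
    using f[OF that] by (auto intro!: derivative_eq_intros)
  have X: "((\<lambda>s. exp_ad ((s * f s) *\<^sub>R A) B) has_vector_derivative (f s + s * f' s) *\<^sub>R X s)
      (at s within {0..r})" if "s \<in> {0..r}" for s
    unfolding X_def by (rule exp_ad_has_vector_derivative[OF a[OF that]])
  have "((\<lambda>s. (f s + s * f' s) *\<^sub>R X s) has_integral exp_ad ((r * f r) *\<^sub>R A) B - B) {0..r}"
    using fundamental_theorem_of_calculus[OF \<open>0 \<le> r\<close> X] by simp
  from has_integral_cmul[OF this, of c]
  have int: "((\<lambda>s. (c * f s) *\<^sub>R X s + (s * c * f' s) *\<^sub>R X s) has_integral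
      c *\<^sub>R (exp_ad ((r * f r) *\<^sub>R A) B - B)) {0..r}"
    by (simp add: algebra_simps)
  have "continuous_on {0..r} X"
    unfolding X_def by (rule continuous_on_vector_derivative) (rule exp_ad_has_vector_derivative[OF a])
  moreover have "continuous_on {0..r} f"
    using DERIV_continuous_on[OF f] .
  ultimately have "(\<lambda>s. (c * f s) *\<^sub>R X s) integrable_on {0..r}"
    and "(\<lambda>s. (s * c * f' s) *\<^sub>R X s) integrable_on {0..r}"
    by (auto intro!: integrable_continuous_interval continuous_intros f'_cont)
  from integral_add[OF this] integral_unique[OF int] show ?thesis
    unfolding X_def[symmetric] by simp
qed

theorem lemma3:
  fixes H1 H2 :: "'n::finite cmat"
    and f1 f2 f1' f2' :: "real \<Rightarrow> real"
    and T h :: real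
    and U :: "real \<Rightarrow> real \<Rightarrow> 'n cmat"
  assumes herm1: "hermitian H1" and herm2: "hermitian H2"
    and f1_deriv: "\<And>t. t \<in> {0..T} \<Longrightarrow> (f1 has_real_derivative f1' t) (at t within {0..T})"
    and f2_deriv: "\<And>t. t \<in> {0..T} \<Longrightarrow> (f2 has_real_derivative f2' t) (at t within {0..T})"
    and f1'_cont: "continuous_on {0..T} f1'"
    and f2'_cont: "continuous_on {0..T} f2'"
    and U_init: "\<And>s. s \<in> {0..T} \<Longrightarrow> U s s = mat 1"
    and U_deriv: "\<And>t s. t \<in> {0..T} \<Longrightarrow> s \<in> {0..T} \<Longrightarrow>
       ((\<lambda>\<tau>. U \<tau> s) has_vector_derivative
          ((- \<i>) *\<^sub>c ((complex_of_real (f1 t) *\<^sub>c H1 + complex_of_real (f2 t) *\<^sub>c H2) ** U t s)))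
         (at t within {0..T})"
    and h: "0 < h" "h \<le> T"
  shows
    "let E = (\<lambda>r. integral {0..r} (\<lambda>s. complex_of_real (f1 r * f2 s) *\<^sub>c
                     exp_ad ((\<i> * complex_of_real (s * f2 s)) *\<^sub>c H2) (commut H1 H2))
                 - (\<i> * complex_of_real (r * f1' r)) *\<^sub>c H1
                 - (\<i> * complex_of_real (r * f2' r)) *\<^sub>c H2
                 + integral {0..r} (\<lambda>s. complex_of_real (s * f1 r * f2' s) *\<^sub>c
                     exp_ad ((\<i> * complex_of_real (s * f2 s)) *\<^sub>c H2) (commut H1 H2)))
     in mexp ((- \<i> * complex_of_real (f2 h * h)) *\<^sub>c H2) ** mexp ((- \<i> * complex_of_real (f1 h * h)) *\<^sub>c H1)
          - U h 0
        = integral {0..h} (\<lambda>s. U h s ** mexp ((- \<i> * complex_of_real (s * f2 s)) *\<^sub>c H2) ** E s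
                                   ** mexp ((- \<i> * complex_of_real (s * f1 s)) *\<^sub>c H1))"
proof -
  define N1 N2 where "N1 = - (\<i> *\<^sub>c H1)" and "N2 = - (\<i> *\<^sub>c H2)"
  define D where "D s = f1 s *\<^sub>R (N1 - exp_ad ((s * f2 s) *\<^sub>R - N2) N1)
    + (s * f1' s) *\<^sub>R N1 + (s * f2' s) *\<^sub>R N2" for s
  define V where "V s = mexp ((s * f2 s) *\<^sub>R N2) ** mexp ((s * f1 s) *\<^sub>R N1)" for s
  define R where "R s = mexp ((s * f2 s) *\<^sub>R N2) ** D s ** mexp ((s * f1 s) *\<^sub>R N1)" for s
  define E where "E = (\<lambda>r. integral {0..r} (\<lambda>s. complex_of_real (f1 r * f2 s) *\<^sub>c
                     exp_ad ((\<i> * complex_of_real (s * f2 s)) *\<^sub>c H2) (commut H1 H2))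
                 - (\<i> * complex_of_real (r * f1' r)) *\<^sub>c H1
                 - (\<i> * complex_of_real (r * f2' r)) *\<^sub>c H2
                 + integral {0..r} (\<lambda>s. complex_of_real (s * f1 r * f2' s) *\<^sub>c
                     exp_ad ((\<i> * complex_of_real (s * f2 s)) *\<^sub>c H2) (commut H1 H2)))"
  interpret skew_hermitian_evolution "{0..T}" "\<lambda>t. f1 t *\<^sub>R N1 + f2 t *\<^sub>R N2" U
    unfolding N1_def N2_def by (rule schroedinger_evolution[OF _ herm1 herm2 U_init U_deriv]) auto
  have "(V has_vector_derivative (f1 s *\<^sub>R N1 + f2 s *\<^sub>R N2) ** V s + R s) (at s within {0..T})"
    if "s \<in> {0..T}" for s
    unfolding V_def R_def D_def
    by (rule splitting_has_vector_derivative[OF f1_deriv[OF that] f2_deriv[OF that]])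
  from variation_of_constants[of 0 h, OF _ _ _ this]
  have "((\<lambda>s. U h s ** R s) has_integral V h - U h 0) {0..h}"
    using h by (simp add: V_def)
  \<comment> \<open>\<open>of_real_mult\<close> would split the real factors before \<open>csmult_mult_of_real\<close> can pull them out.\<close>
  moreover have "E s = D s" if "s \<in> {0..T}" for s
    using integral_exp_ad_commut[of s f2 f2' "f1 s" "\<i> *\<^sub>c H2" "\<i> *\<^sub>c H1"] that
      DERIV_subset[OF f2_deriv] continuous_on_subset[OF f2'_cont]
    by (simp add: E_def D_def N1_def N2_def commut_i_csmult subset_iff algebra_simps del: of_real_mult)
  ultimately have "((\<lambda>s. U h s ** mexp ((- \<i> * complex_of_real (s * f2 s)) *\<^sub>c H2) ** E s
      ** mexp ((- \<i> * complex_of_real (s * f1 s)) *\<^sub>c H1)) has_integral V h - U h 0) {0..h}"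
    using h by (elim has_integral_eq[rotated]) (simp add: R_def N1_def N2_def matrix_mul_assoc del: of_real_mult)
  then show ?thesis
    unfolding Let_def E_def[symmetric] V_def N1_def N2_def
    by (simp add: integral_unique mult.commute del: of_real_mult)
qed

end
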